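(* Let $R$ be an associative ring with identity and $M$ a left $R$-module that is projective in $\sigma[M]$. Then: (1) $\Lambda(M)$, with the product $N_ML$, is a quasi-quantale; in fact $(\sum_{i\in I}N_i)_ML=\sum_{i\in I}(N_{i\,M}L)$ for every family $\{N_i\}_{i\in I}\subseteq\Lambda(M)$ and every $L\in\Lambda(M)$. (2) $\Lambda^{fi}(M)$ is a right-unital subquasi-quantale of $\Lambda(M)$: it is closed under arbitrary sums and under the product, and $N_MM=N$ for all $N\in\Lambda^{fi}(M)$.
   Context: $\Lambda(M)$ is the complete lattice of submodules of $M$ (join = sum, meet = intersection), and $\Lambda^{fi}(M)$ is the set of fully invariant submodules $N$ (i.e. $f(N)\subseteq N$ for all $f\in\mathrm{End}_R(M)$). For $N,L\in\Lambda(M)$, $N_ML=\sum\{f(N)\mid f\in\mathrm{Hom}_R(M,L)\}$. $\sigma[M]$ is the full subcategory of left $R$-modules isomorphic to submodules of $M$-generated modules. A quasi-quantale is a complete lattice with an associative product $(a,b)\mapsto ab$ such that $(\bigvee X)a=\bigvee\{xa\mid x\in X\}$ and $a(\bigvee X)=\bigvee\{ax\mid x\in X\}$ for every directed (non-empty, upward-directed) subset $X$ and every element $a$. *)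

theory Defs
  imports "HOL-Algebra.Module"
begin

text \<open>HOL-Algebra's locale module requires a commutative ring, so we define left modules
  directly, reusing the record type of HOL-Algebra modules (its multiplicative fields are unused).\<close>

definition left_module :: "('r, 'x) ring_scheme \<Rightarrow> ('r, 'a, 'm) module_scheme \<Rightarrow> bool" where
  "left_module R M \<longleftrightarrow> ring R \<and> abelian_group M \<and>
     (\<forall>a\<in>carrier R. \<forall>x\<in>carrier M. a \<odot>\<^bsub>M\<^esub> x \<in> carrier M) \<and>
     (\<forall>a\<in>carrier R. \<forall>b\<in>carrier R. \<forall>x\<in>carrier M.
        (a \<oplus>\<^bsub>R\<^esub> b) \<odot>\<^bsub>M\<^esub> x = a \<odot>\<^bsub>M\<^esub> x \<oplus>\<^bsub>M\<^esub> b \<odot>\<^bsub>M\<^esub> x) \<and>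
     (\<forall>a\<in>carrier R. \<forall>x\<in>carrier M. \<forall>y\<in>carrier M.
        a \<odot>\<^bsub>M\<^esub> (x \<oplus>\<^bsub>M\<^esub> y) = a \<odot>\<^bsub>M\<^esub> x \<oplus>\<^bsub>M\<^esub> a \<odot>\<^bsub>M\<^esub> y) \<and>
     (\<forall>a\<in>carrier R. \<forall>b\<in>carrier R. \<forall>x\<in>carrier M.
        (a \<otimes>\<^bsub>R\<^esub> b) \<odot>\<^bsub>M\<^esub> x = a \<odot>\<^bsub>M\<^esub> (b \<odot>\<^bsub>M\<^esub> x)) \<and>
     (\<forall>x\<in>carrier M. \<one>\<^bsub>R\<^esub> \<odot>\<^bsub>M\<^esub> x = x)"

definition lsubmodule :: "('r, 'x) ring_scheme \<Rightarrow> ('r, 'a, 'm) module_scheme \<Rightarrow> 'a set \<Rightarrow> bool" where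
  "lsubmodule R M N \<longleftrightarrow> N \<subseteq> carrier M \<and> \<zero>\<^bsub>M\<^esub> \<in> N \<and>
     (\<forall>x\<in>N. \<forall>y\<in>N. x \<oplus>\<^bsub>M\<^esub> y \<in> N) \<and> (\<forall>x\<in>N. \<ominus>\<^bsub>M\<^esub> x \<in> N) \<and>
     (\<forall>a\<in>carrier R. \<forall>x\<in>N. a \<odot>\<^bsub>M\<^esub> x \<in> N)"

definition Lat :: "('r, 'x) ring_scheme \<Rightarrow> ('r, 'a, 'm) module_scheme \<Rightarrow> 'a set set" where
  "Lat R M = {N. lsubmodule R M N}"

definition lhom :: "('r, 'x) ring_scheme \<Rightarrow> ('r, 'a, 'm) module_scheme \<Rightarrow> ('r, 'b, 'n) module_scheme
    \<Rightarrow> ('a \<Rightarrow> 'b) set" where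
  "lhom R M N = {f. (\<forall>x\<in>carrier M. f x \<in> carrier N) \<and>
     (\<forall>x\<in>carrier M. \<forall>y\<in>carrier M. f (x \<oplus>\<^bsub>M\<^esub> y) = f x \<oplus>\<^bsub>N\<^esub> f y) \<and>
     (\<forall>a\<in>carrier R. \<forall>x\<in>carrier M. f (a \<odot>\<^bsub>M\<^esub> x) = a \<odot>\<^bsub>N\<^esub> f x)}"

definition lsum :: "('r, 'x) ring_scheme \<Rightarrow> ('r, 'a, 'm) module_scheme \<Rightarrow> 'a set set \<Rightarrow> 'a set" where
  "lsum R M S = \<Inter>{L. lsubmodule R M L \<and> \<Union>S \<subseteq> L}"

text \<open>The product N_M L = \<Sum>{f(N) | f \<in> Hom_R(M,L)}; a map M \<rightarrow> L is an
  endomorphism-shaped linear map M \<rightarrow> M with image inside L.\<close>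
definition mprod :: "('r, 'x) ring_scheme \<Rightarrow> ('r, 'a, 'm) module_scheme \<Rightarrow> 'a set \<Rightarrow> 'a set \<Rightarrow> 'a set" where
  "mprod R M N L = lsum R M {f ` N | f. f \<in> lhom R M M \<and> f ` carrier M \<subseteq> L}"

definition fully_invariant :: "('r, 'x) ring_scheme \<Rightarrow> ('r, 'a, 'm) module_scheme \<Rightarrow> 'a set \<Rightarrow> bool" where
  "fully_invariant R M N \<longleftrightarrow> lsubmodule R M N \<and> (\<forall>f\<in>lhom R M M. f ` N \<subseteq> N)"

definition Lat_fi :: "('r, 'x) ring_scheme \<Rightarrow> ('r, 'a, 'm) module_scheme \<Rightarrow> 'a set set" where
  "Lat_fi R M = {N. fully_invariant R M N}"

definition m_generated :: "('r, 'x) ring_scheme \<Rightarrow> ('r, 'a, 'm) module_scheme \<Rightarrow> ('r, 'b, 'n) module_scheme \<Rightarrow> bool" where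
  "m_generated R M X \<longleftrightarrow> left_module R X \<and>
     carrier X = lsum R X {f ` carrier M | f. f \<in> lhom R M X}"

type_synonym 'a univ = "('a \<Rightarrow> 'a) \<Rightarrow> 'a"

definition in_sigma :: "('r, 'x) ring_scheme \<Rightarrow> ('r, 'a, 'm) module_scheme \<Rightarrow> ('r, 'a univ) module \<Rightarrow> bool" where
  "in_sigma R M A \<longleftrightarrow> left_module R A \<and>
     (\<exists>X :: ('r, 'a univ) module. m_generated R M X \<and>
        (\<exists>e. e \<in> lhom R A X \<and> inj_on e (carrier A)))"

definition sigma_projective :: "('r, 'x) ring_scheme \<Rightarrow> ('r, 'a, 'm) module_scheme \<Rightarrow> bool" where
  "sigma_projective R M \<longleftrightarrow>
     (\<forall>(A :: ('r, 'a univ) module) (B :: ('r, 'a univ) module) g f.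
        in_sigma R M A \<and> in_sigma R M B \<and> g \<in> lhom R A B \<and> g ` carrier A = carrier B \<and>
        f \<in> lhom R M B \<longrightarrow>
        (\<exists>h \<in> lhom R M A. \<forall>x\<in>carrier M. g (h x) = f x))"

definition is_sup_in :: "'b set set \<Rightarrow> 'b set set \<Rightarrow> 'b set \<Rightarrow> bool" where
  "is_sup_in C X s \<longleftrightarrow> s \<in> C \<and> (\<forall>x\<in>X. x \<subseteq> s) \<and> (\<forall>t\<in>C. (\<forall>x\<in>X. x \<subseteq> t) \<longrightarrow> s \<subseteq> t)"

definition Sup_in :: "'b set set \<Rightarrow> 'b set set \<Rightarrow> 'b set" where
  "Sup_in C X = (THE s. is_sup_in C X s)"

definition directed_set :: "'b set set \<Rightarrow> bool" where
  "directed_set X \<longleftrightarrow> X \<noteq> {} \<and> (\<forall>x\<in>X. \<forall>y\<in>X. \<exists>z\<in>X. x \<subseteq> z \<and> y \<subseteq> z)"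

definition quasi_quantale :: "'b set set \<Rightarrow> ('b set \<Rightarrow> 'b set \<Rightarrow> 'b set) \<Rightarrow> bool" where
  "quasi_quantale C p \<longleftrightarrow>
     (\<forall>X. X \<subseteq> C \<longrightarrow> (\<exists>s. is_sup_in C X s)) \<and>
     (\<forall>a\<in>C. \<forall>b\<in>C. p a b \<in> C) \<and>
     (\<forall>a\<in>C. \<forall>b\<in>C. \<forall>c\<in>C. p (p a b) c = p a (p b c)) \<and>
     (\<forall>X a. X \<subseteq> C \<and> directed_set X \<and> a \<in> C \<longrightarrow>
        p (Sup_in C X) a = Sup_in C ((\<lambda>x. p x a) ` X) \<and>
        p a (Sup_in C X) = Sup_in C ((\<lambda>x. p a x) ` X))"

end

theory Submission
  imports Defs
begin

text \<open>The product \<open>N\<^sub>ML\<close> is the least submodule containing \<open>f(N)\<close> for every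
  \<open>f : M \<rightarrow> L\<close>. From this alone one gets distributivity over sums in the left argument,
  the inclusion \<open>(N\<^sub>ML)\<^sub>MK \<subseteq> N\<^sub>M(L\<^sub>MK)\<close>, and the facts about fully invariant
  submodules. Projectivity of \<open>M\<close> in \<open>\<sigma>[M]\<close> supplies the remaining two inclusions:
  the summation map \<open>\<Oplus>\<^sub>j Q\<^sub>j \<rightarrow> \<Sum>\<^sub>j u\<^sub>j(Q\<^sub>j)\<close> is an epimorphism in \<open>\<sigma>[M]\<close>,
  so every \<open>f : M \<rightarrow> \<Sum>\<^sub>j u\<^sub>j(Q\<^sub>j)\<close> factors as \<open>\<Sum>\<^sub>j u\<^sub>j \<circ> h\<^sub>j\<close> with \<open>h\<^sub>j : M \<rightarrow> Q\<^sub>j\<close>.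
  With \<open>u\<^sub>j = id\<close> and \<open>Q\<^sub>j\<close> ranging over \<open>X\<close> this gives
  \<open>N\<^sub>M(\<Sum>X) \<subseteq> \<Sum>{N\<^sub>ML | L \<in> X}\<close>; with \<open>u\<^sub>j\<close> ranging over the maps \<open>M \<rightarrow> K\<close> and
  \<open>Q\<^sub>j = L\<close> it gives \<open>N\<^sub>M(L\<^sub>MK) \<subseteq> (N\<^sub>ML)\<^sub>MK\<close>.\<close>

lemma Sup_in_eqI:
  assumes "is_sup_in C X s"
  shows "Sup_in C X = s"
  unfolding Sup_in_def
proof (rule the_equality)
  show "is_sup_in C X s" by (rule assms)
  fix t assume "is_sup_in C X t"
  thus "t = s" using assms unfolding is_sup_in_def by (meson subset_antisym)
qed

lemma quasi_quantaleI:
  assumes lub: "\<And>X. X \<subseteq> C \<Longrightarrow> is_sup_in C X (lub X)"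
    and closed: "\<And>a b. a \<in> C \<Longrightarrow> b \<in> C \<Longrightarrow> p a b \<in> C"
    and assoc: "\<And>a b c. a \<in> C \<Longrightarrow> b \<in> C \<Longrightarrow> c \<in> C \<Longrightarrow> p (p a b) c = p a (p b c)"
    and distrib_left: "\<And>X a. X \<subseteq> C \<Longrightarrow> a \<in> C \<Longrightarrow> p (lub X) a = lub ((\<lambda>x. p x a) ` X)"
    and distrib_right: "\<And>X a. X \<subseteq> C \<Longrightarrow> a \<in> C \<Longrightarrow> p a (lub X) = lub ((\<lambda>x. p a x) ` X)"
  shows "quasi_quantale C p"
proof -
  have Sup: "Sup_in C X = lub X" if "X \<subseteq> C" for X
    using Sup_in_eqI[OF lub[OF that]] .
  show ?thesis
    unfolding quasi_quantale_def
  proof (intro conjI allI ballI impI)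
    fix X a assume "X \<subseteq> C \<and> directed_set X \<and> a \<in> C"
    then have X: "X \<subseteq> C" and a: "a \<in> C" by auto
    have "(\<lambda>x. p x a) ` X \<subseteq> C" "(\<lambda>x. p a x) ` X \<subseteq> C"
      using closed X a by auto
    then show "p (Sup_in C X) a = Sup_in C ((\<lambda>x. p x a) ` X)"
      and "p a (Sup_in C X) = Sup_in C ((\<lambda>x. p a x) ` X)"
      using distrib_left[OF X a] distrib_right[OF X a] by (simp_all add: Sup X)
  qed (use lub closed assoc in auto)
qed

lemma lhom_closed: "f \<in> lhom R A B \<Longrightarrow> x \<in> carrier A \<Longrightarrow> f x \<in> carrier B"
  unfolding lhom_def by auto

lemma lhom_add:
  "f \<in> lhom R A B \<Longrightarrow> x \<in> carrier A \<Longrightarrow> y \<in> carrier A \<Longrightarrow> f (x \<oplus>\<^bsub>A\<^esub> y) = f x \<oplus>\<^bsub>B\<^esub> f y"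
  unfolding lhom_def by auto

lemma lhom_smult:
  "f \<in> lhom R A B \<Longrightarrow> a \<in> carrier R \<Longrightarrow> x \<in> carrier A \<Longrightarrow> f (a \<odot>\<^bsub>A\<^esub> x) = a \<odot>\<^bsub>B\<^esub> f x"
  unfolding lhom_def by auto

lemma lhom_comp: "f \<in> lhom R A B \<Longrightarrow> g \<in> lhom R B C \<Longrightarrow> g \<circ> f \<in> lhom R A C"
  unfolding lhom_def by auto

lemma lhom_id: "id \<in> lhom R A A"
  unfolding lhom_def by auto

locale lmodule =
  fixes R :: "('r, 'x) ring_scheme" and M :: "('r, 'a, 'm) module_scheme" (structure)
  assumes left_module: "left_module R M"
begin

sublocale abelian_group M
  using left_module unfolding left_module_def by auto

lemma ring: "ring R"
  using left_module unfolding left_module_def by auto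

lemma smult_closed [simp, intro]: "a \<in> carrier R \<Longrightarrow> x \<in> carrier M \<Longrightarrow> a \<odot> x \<in> carrier M"
  using left_module unfolding left_module_def by auto

lemma smult_add_left:
  "a \<in> carrier R \<Longrightarrow> b \<in> carrier R \<Longrightarrow> x \<in> carrier M \<Longrightarrow> (a \<oplus>\<^bsub>R\<^esub> b) \<odot> x = a \<odot> x \<oplus> b \<odot> x"
  using left_module unfolding left_module_def by auto

lemma smult_add_right:
  "a \<in> carrier R \<Longrightarrow> x \<in> carrier M \<Longrightarrow> y \<in> carrier M \<Longrightarrow> a \<odot> (x \<oplus> y) = a \<odot> x \<oplus> a \<odot> y"
  using left_module unfolding left_module_def by auto

lemma smult_assoc:
  "a \<in> carrier R \<Longrightarrow> b \<in> carrier R \<Longrightarrow> x \<in> carrier M \<Longrightarrow> (a \<otimes>\<^bsub>R\<^esub> b) \<odot> x = a \<odot> (b \<odot> x)"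
  using left_module unfolding left_module_def by auto

lemma smult_one: "x \<in> carrier M \<Longrightarrow> \<one>\<^bsub>R\<^esub> \<odot> x = x"
  using left_module unfolding left_module_def by auto

lemma smult_zero [simp]: "a \<in> carrier R \<Longrightarrow> a \<odot> \<zero> = \<zero>"
  by (metis add.r_cancel_one l_zero smult_add_right smult_closed zero_closed)

lemma finsum_smult:
  assumes a: "a \<in> carrier R" and F: "finite F" and t: "t \<in> F \<rightarrow> carrier M"
  shows "a \<odot> finsum M t F = finsum M (\<lambda>j. a \<odot> t j) F"
  using F t
proof (induction F rule: finite_induct)
  case (insert j F)
  then have "t \<in> F \<rightarrow> carrier M" "t j \<in> carrier M" "(\<lambda>j. a \<odot> t j) \<in> F \<rightarrow> carrier M"
    using a by auto
  with insert a show ?case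
    by (simp add: finsum_insert smult_add_right finsum_closed)
qed (use a in simp)

lemma lhom_zero:
  assumes A: "abelian_group A" and f: "f \<in> lhom R A M"
  shows "f \<zero>\<^bsub>A\<^esub> = \<zero>"
proof -
  interpret A: abelian_group A by (rule A)
  have "f \<zero>\<^bsub>A\<^esub> \<oplus> f \<zero>\<^bsub>A\<^esub> = f \<zero>\<^bsub>A\<^esub>"
    using lhom_add[OF f A.zero_closed A.zero_closed] by simp
  then show ?thesis
    using lhom_closed[OF f A.zero_closed] by (metis add.r_cancel_one)
qed

lemma lhom_minus:
  assumes A: "abelian_group A" and f: "f \<in> lhom R A M" and x: "x \<in> carrier A"
  shows "f (\<ominus>\<^bsub>A\<^esub> x) = \<ominus> f x"
proof -
  interpret A: abelian_group A by (rule A)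
  have "f (\<ominus>\<^bsub>A\<^esub> x) \<oplus> f x = \<zero>"
    using lhom_add[OF f A.a_inv_closed[OF x] x] lhom_zero[OF A f] x by (simp add: A.l_neg)
  then show ?thesis
    using lhom_closed[OF f] x by (metis A.a_inv_closed minus_equality)
qed

lemma lsubmoduleD:
  assumes "lsubmodule R M N"
  shows "N \<subseteq> carrier M" "\<zero> \<in> N" "x \<in> N \<Longrightarrow> y \<in> N \<Longrightarrow> x \<oplus> y \<in> N"
    "x \<in> N \<Longrightarrow> \<ominus> x \<in> N" "a \<in> carrier R \<Longrightarrow> x \<in> N \<Longrightarrow> a \<odot> x \<in> N"
  using assms unfolding lsubmodule_def by auto

lemma lsubmodule_carrier: "lsubmodule R M (carrier M)"
  unfolding lsubmodule_def by auto

lemma lsubmodule_zero: "lsubmodule R M {\<zero>}"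
  unfolding lsubmodule_def by auto

lemma lsubmodule_lsum: "\<Union>S \<subseteq> carrier M \<Longrightarrow> lsubmodule R M (lsum R M S)"
  unfolding lsum_def lsubmodule_def using lsubmodule_carrier[unfolded lsubmodule_def]
  by (auto simp: Inter_iff)

lemma lsum_upper: "N \<in> S \<Longrightarrow> N \<subseteq> lsum R M S"
  unfolding lsum_def by auto

lemma lsum_least: "lsubmodule R M L \<Longrightarrow> \<Union>S \<subseteq> L \<Longrightarrow> lsum R M S \<subseteq> L"
  unfolding lsum_def by auto

lemma lsubmodule_vimage:
  assumes f: "f \<in> lhom R M M" and T: "lsubmodule R M T"
  shows "lsubmodule R M {x \<in> carrier M. f x \<in> T}"
proof -
  have "f \<zero> = \<zero>" "\<And>x. x \<in> carrier M \<Longrightarrow> f (\<ominus> x) = \<ominus> f x"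
    using lhom_zero[OF abelian_group_axioms f] lhom_minus[OF abelian_group_axioms f] by auto
  then show ?thesis
    using lsubmoduleD[OF T] lhom_add[OF f] lhom_smult[OF f] unfolding lsubmodule_def by auto
qed

lemma lsubmodule_image:
  assumes A: "left_module R A" and f: "f \<in> lhom R A M"
  shows "lsubmodule R M (f ` carrier A)"
proof -
  interpret A: lmodule R A by unfold_locales (rule A)
  show ?thesis
    unfolding lsubmodule_def
  proof (intro conjI ballI)
    show "f ` carrier A \<subseteq> carrier M" using lhom_closed[OF f] by blast
    show "\<zero> \<in> f ` carrier A"
      using lhom_zero[OF A.abelian_group_axioms f] A.zero_closed by (rule image_eqI[OF sym])
    show "x \<oplus> y \<in> f ` carrier A" if x: "x \<in> f ` carrier A" and y: "y \<in> f ` carrier A" for x y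
    proof -
      obtain x' y' where "x' \<in> carrier A" "y' \<in> carrier A" "x = f x'" "y = f y'"
        using x y by (elim imageE)
      then have "x \<oplus> y = f (x' \<oplus>\<^bsub>A\<^esub> y')" "x' \<oplus>\<^bsub>A\<^esub> y' \<in> carrier A"
        using lhom_add[OF f] by simp_all
      then show ?thesis by (rule image_eqI)
    qed
    show "\<ominus> x \<in> f ` carrier A" if x: "x \<in> f ` carrier A" for x
    proof -
      obtain x' where "x' \<in> carrier A" "x = f x'" using x by (elim imageE)
      then have "\<ominus> x = f (\<ominus>\<^bsub>A\<^esub> x')" "\<ominus>\<^bsub>A\<^esub> x' \<in> carrier A"
        using lhom_minus[OF A.abelian_group_axioms f] by simp_all
      then show ?thesis by (rule image_eqI)
    qed
    show "a \<odot> x \<in> f ` carrier A" if a: "a \<in> carrier R" and x: "x \<in> f ` carrier A" for a x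
    proof -
      obtain x' where "x' \<in> carrier A" "x = f x'" using x by (elim imageE)
      then have "a \<odot> x = f (a \<odot>\<^bsub>A\<^esub> x')" "a \<odot>\<^bsub>A\<^esub> x' \<in> carrier A"
        using lhom_smult[OF f] a by simp_all
      then show ?thesis by (rule image_eqI)
    qed
  qed
qed

lemma finsum_in_lsubmodule:
  assumes T: "lsubmodule R M T" and F: "finite F" and t: "\<forall>j\<in>F. t j \<in> T"
  shows "finsum M t F \<in> T"
  using F t
proof (induction F rule: finite_induct)
  case (insert j F)
  then have "t \<in> F \<rightarrow> carrier M" "t j \<in> carrier M" using lsubmoduleD(1)[OF T] by auto
  with insert show ?case using lsubmoduleD[OF T] by (simp add: finsum_insert)
qed (use lsubmoduleD[OF T] in simp)

lemma Lat_iff: "N \<in> Lat R M \<longleftrightarrow> lsubmodule R M N"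
  by (simp add: Lat_def)

lemma Lat_subset_carrier: "N \<in> Lat R M \<Longrightarrow> N \<subseteq> carrier M"
  using lsubmoduleD(1) by (simp add: Lat_def)

lemma Lat_fi_subset_Lat: "Lat_fi R M \<subseteq> Lat R M"
  by (auto simp: Lat_fi_def Lat_def fully_invariant_def)

lemma Lat_fiD: "N \<in> Lat_fi R M \<Longrightarrow> f \<in> lhom R M M \<Longrightarrow> f ` N \<subseteq> N"
  by (simp add: Lat_fi_def fully_invariant_def)

lemma lsum_in_Lat: "S \<subseteq> Lat R M \<Longrightarrow> lsum R M S \<in> Lat R M"
  unfolding Lat_iff by (rule lsubmodule_lsum) (use Lat_subset_carrier in blast)

lemma is_sup_in_Lat: "S \<subseteq> Lat R M \<Longrightarrow> is_sup_in (Lat R M) S (lsum R M S)"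
  unfolding is_sup_in_def Lat_iff
  by (intro conjI ballI impI lsum_upper lsum_least lsum_in_Lat[unfolded Lat_iff] Union_least)
    (auto simp: Lat_iff)

lemma lsum_in_Lat_fi:
  assumes S: "S \<subseteq> Lat_fi R M"
  shows "lsum R M S \<in> Lat_fi R M"
proof -
  have sub: "lsubmodule R M (lsum R M S)"
    using lsum_in_Lat S Lat_fi_subset_Lat unfolding Lat_iff by blast
  have "f ` lsum R M S \<subseteq> lsum R M S" if f: "f \<in> lhom R M M" for f
  proof -
    have "N \<subseteq> {x \<in> carrier M. f x \<in> lsum R M S}" if N: "N \<in> S" for N
    proof -
      have "N \<in> Lat_fi R M" using N S by blast
      then have "N \<subseteq> carrier M" "f ` N \<subseteq> N"
        using Lat_fi_subset_Lat Lat_subset_carrier Lat_fiD[OF _ f] by blast+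
      then show ?thesis using lsum_upper[OF N] by blast
    qed
    then have "\<Union>S \<subseteq> {x \<in> carrier M. f x \<in> lsum R M S}" by blast
    then have "lsum R M S \<subseteq> {x \<in> carrier M. f x \<in> lsum R M S}"
      by (rule lsum_least[OF lsubmodule_vimage[OF f sub]])
    then show ?thesis by blast
  qed
  with sub show ?thesis by (simp add: Lat_fi_def fully_invariant_def)
qed

lemma is_sup_in_Lat_fi: "S \<subseteq> Lat_fi R M \<Longrightarrow> is_sup_in (Lat_fi R M) S (lsum R M S)"
  unfolding is_sup_in_def
  by (intro conjI ballI impI lsum_upper lsum_least lsum_in_Lat_fi Union_least)
    (use Lat_fi_subset_Lat in \<open>auto simp: Lat_iff\<close>)

lemma lsubmodule_mprod: "N \<subseteq> carrier M \<Longrightarrow> lsubmodule R M (mprod R M N L)"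
  unfolding mprod_def by (rule lsubmodule_lsum) (auto dest: lhom_closed)

lemma mprod_in_Lat: "N \<in> Lat R M \<Longrightarrow> mprod R M N L \<in> Lat R M"
  using lsubmodule_mprod Lat_subset_carrier by (simp add: Lat_iff)

lemma image_subset_mprod: "f \<in> lhom R M M \<Longrightarrow> f ` carrier M \<subseteq> L \<Longrightarrow> f ` N \<subseteq> mprod R M N L"
  unfolding mprod_def by (rule lsum_upper) blast

lemma mprod_least:
  "lsubmodule R M T \<Longrightarrow> (\<And>f. f \<in> lhom R M M \<Longrightarrow> f ` carrier M \<subseteq> L \<Longrightarrow> f ` N \<subseteq> T)
    \<Longrightarrow> mprod R M N L \<subseteq> T"
  unfolding mprod_def by (rule lsum_least) auto

lemma mprod_mono:
  assumes "N \<subseteq> N'" "L \<subseteq> L'" "N' \<subseteq> carrier M"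
  shows "mprod R M N L \<subseteq> mprod R M N' L'"
proof (rule mprod_least[OF lsubmodule_mprod[OF assms(3)]])
  fix f assume "f \<in> lhom R M M" "f ` carrier M \<subseteq> L"
  then show "f ` N \<subseteq> mprod R M N' L'"
    using image_subset_mprod[of f L' N'] assms by blast
qed

lemma mprod_lsum_left:
  assumes N: "\<forall>i\<in>I. N i \<in> Lat R M"
  shows "mprod R M (lsum R M (N ` I)) L = lsum R M ((\<lambda>i. mprod R M (N i) L) ` I)"
    (is "?lhs = ?rhs")
proof
  have "(\<lambda>i. mprod R M (N i) L) ` I \<subseteq> Lat R M" using N by (auto intro: mprod_in_Lat)
  then have rhs: "lsubmodule R M ?rhs" using lsum_in_Lat by (simp add: Lat_iff)
  show "?lhs \<subseteq> ?rhs"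
  proof (rule mprod_least[OF rhs])
    fix f assume f: "f \<in> lhom R M M" "f ` carrier M \<subseteq> L"
    have "N i \<subseteq> {x \<in> carrier M. f x \<in> ?rhs}" if i: "i \<in> I" for i
    proof -
      have "f ` N i \<subseteq> ?rhs"
        using image_subset_mprod[OF f, of "N i"] lsum_upper[OF imageI[OF i]] by (rule subset_trans)
      moreover have "N i \<subseteq> carrier M" using Lat_subset_carrier N i by blast
      ultimately show ?thesis by blast
    qed
    then have "lsum R M (N ` I) \<subseteq> {x \<in> carrier M. f x \<in> ?rhs}"
      by (intro lsum_least[OF lsubmodule_vimage[OF f(1) rhs]] UN_least)
    then show "f ` lsum R M (N ` I) \<subseteq> ?rhs" by blast
  qed
  have carrier: "lsum R M (N ` I) \<subseteq> carrier M"
    by (rule Lat_subset_carrier[OF lsum_in_Lat]) (use N in blast)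
  have "mprod R M (N i) L \<subseteq> ?lhs" if "i \<in> I" for i
    by (rule mprod_mono[OF lsum_upper[OF imageI[OF that]] subset_refl carrier])
  then show "?rhs \<subseteq> ?lhs"
    by (intro lsum_least[OF lsubmodule_mprod[OF carrier]] UN_least)
qed

lemma mprod_in_Lat_fi:
  assumes N: "N \<subseteq> carrier M" and L: "L \<in> Lat_fi R M"
  shows "mprod R M N L \<in> Lat_fi R M"
proof -
  have sub: "lsubmodule R M (mprod R M N L)" by (rule lsubmodule_mprod[OF N])
  have "g ` mprod R M N L \<subseteq> mprod R M N L" if g: "g \<in> lhom R M M" for g
  proof -
    have "mprod R M N L \<subseteq> {x \<in> carrier M. g x \<in> mprod R M N L}"
    proof (rule mprod_least[OF lsubmodule_vimage[OF g sub]])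
      fix f assume f: "f \<in> lhom R M M" "f ` carrier M \<subseteq> L"
      have "(g \<circ> f) ` carrier M \<subseteq> L"
        using f(2) Lat_fiD[OF L g] by (auto simp: image_subset_iff)
      then have "(g \<circ> f) ` N \<subseteq> mprod R M N L"
        by (rule image_subset_mprod[OF lhom_comp[OF f(1) g]])
      then show "f ` N \<subseteq> {x \<in> carrier M. g x \<in> mprod R M N L}"
        using N lhom_closed[OF f(1)] by auto
    qed
    then show ?thesis by blast
  qed
  with sub show ?thesis by (simp add: Lat_fi_def fully_invariant_def)
qed

lemma mprod_carrier_right:
  assumes N: "N \<in> Lat_fi R M"
  shows "mprod R M N (carrier M) = N"
proof
  show "mprod R M N (carrier M) \<subseteq> N"
    using N Lat_fi_subset_Lat Lat_fiD[OF N] by (intro mprod_least) (auto simp: Lat_iff)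
  show "N \<subseteq> mprod R M N (carrier M)"
    using image_subset_mprod[OF lhom_id, of "carrier M" N] by simp
qed

lemma mprod_assoc_subset:
  assumes N: "N \<in> Lat R M"
  shows "mprod R M (mprod R M N L) K \<subseteq> mprod R M N (mprod R M L K)"
proof (rule mprod_least)
  let ?T = "mprod R M N (mprod R M L K)"
  show T: "lsubmodule R M ?T" using mprod_in_Lat[OF N] by (simp add: Lat_iff)
  fix f assume f: "f \<in> lhom R M M" "f ` carrier M \<subseteq> K"
  have "mprod R M N L \<subseteq> {x \<in> carrier M. f x \<in> ?T}"
  proof (rule mprod_least[OF lsubmodule_vimage[OF f(1) T]])
    fix g assume g: "g \<in> lhom R M M" "g ` carrier M \<subseteq> L"
    have "(f \<circ> g) ` carrier M \<subseteq> mprod R M L K"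
      using g(2) image_subset_mprod[OF f, of L] by (auto simp: image_subset_iff)
    then have "(f \<circ> g) ` N \<subseteq> ?T"
      by (rule image_subset_mprod[OF lhom_comp[OF g(1) f(1)]])
    then show "g ` N \<subseteq> {x \<in> carrier M. f x \<in> ?T}"
      using Lat_subset_carrier[OF N] lhom_closed[OF g(1)] by auto
  qed
  then show "f ` mprod R M N L \<subseteq> ?T" by blast
qed

end

text \<open>Direct sums are indexed by \<open>'a \<Rightarrow> 'a\<close> because \<open>\<sigma>[M]\<close> only contains modules with
  carrier type \<open>'a univ\<close>; this index type is large enough for families of endomorphisms and,
  after an injective recoding, for families of submodules. The ring fields are unused.\<close>

definition direct_sum :: "('r, 'a, 'm) module_scheme \<Rightarrow> (('a \<Rightarrow> 'a) \<Rightarrow> 'a set) \<Rightarrow> ('r, 'a univ) module"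
  where "direct_sum M Q =
    \<lparr>carrier = {\<phi>. (\<forall>k. \<phi> k \<in> Q k) \<and> finite {k. \<phi> k \<noteq> \<zero>\<^bsub>M\<^esub>}},
     mult = (\<lambda>\<phi> \<psi>. \<phi>), one = (\<lambda>k. \<zero>\<^bsub>M\<^esub>), zero = (\<lambda>k. \<zero>\<^bsub>M\<^esub>),
     add = (\<lambda>\<phi> \<psi> k. \<phi> k \<oplus>\<^bsub>M\<^esub> \<psi> k), smult = (\<lambda>a \<phi> k. a \<odot>\<^bsub>M\<^esub> \<phi> k)\<rparr>"

definition direct_sum_inj :: "('r, 'a, 'm) module_scheme \<Rightarrow> ('a \<Rightarrow> 'a) \<Rightarrow> 'a \<Rightarrow> 'a univ"
  where "direct_sum_inj M k m = (\<lambda>k'. if k' = k then m else \<zero>\<^bsub>M\<^esub>)"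

lemma direct_sum_simps:
  "\<phi> \<in> carrier (direct_sum M Q) \<longleftrightarrow> (\<forall>k. \<phi> k \<in> Q k) \<and> finite {k. \<phi> k \<noteq> \<zero>\<^bsub>M\<^esub>}"
  "\<zero>\<^bsub>direct_sum M Q\<^esub> = (\<lambda>k. \<zero>\<^bsub>M\<^esub>)"
  "\<phi> \<oplus>\<^bsub>direct_sum M Q\<^esub> \<psi> = (\<lambda>k. \<phi> k \<oplus>\<^bsub>M\<^esub> \<psi> k)"
  "a \<odot>\<^bsub>direct_sum M Q\<^esub> \<phi> = (\<lambda>k. a \<odot>\<^bsub>M\<^esub> \<phi> k)"
  by (simp_all add: direct_sum_def)

context lmodule
begin

lemma abelian_group_direct_sum:
  assumes Q: "\<And>k. lsubmodule R M (Q k)"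
  shows "abelian_group (direct_sum M Q)"
proof -
  note QD = lsubmoduleD[OF Q]
  have C: "\<phi> k \<in> carrier M" if "\<phi> \<in> carrier (direct_sum M Q)" for \<phi> k
    using that QD(1) by (auto simp: direct_sum_simps)
  show ?thesis
  proof (rule abelian_groupI)
    fix \<phi> \<psi> assume "\<phi> \<in> carrier (direct_sum M Q)" "\<psi> \<in> carrier (direct_sum M Q)"
    moreover have "{k. \<phi> k \<oplus> \<psi> k \<noteq> \<zero>} \<subseteq> {k. \<phi> k \<noteq> \<zero>} \<union> {k. \<psi> k \<noteq> \<zero>}" by auto
    ultimately show "\<phi> \<oplus>\<^bsub>direct_sum M Q\<^esub> \<psi> \<in> carrier (direct_sum M Q)"
      using QD(3) by (auto simp: direct_sum_simps elim: finite_subset)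
  next
    show "\<zero>\<^bsub>direct_sum M Q\<^esub> \<in> carrier (direct_sum M Q)"
      using QD(2) by (simp add: direct_sum_simps)
  next
    fix \<phi> \<psi> \<chi> assume "\<phi> \<in> carrier (direct_sum M Q)" "\<psi> \<in> carrier (direct_sum M Q)"
      "\<chi> \<in> carrier (direct_sum M Q)"
    then show "\<phi> \<oplus>\<^bsub>direct_sum M Q\<^esub> \<psi> \<oplus>\<^bsub>direct_sum M Q\<^esub> \<chi> =
        \<phi> \<oplus>\<^bsub>direct_sum M Q\<^esub> (\<psi> \<oplus>\<^bsub>direct_sum M Q\<^esub> \<chi>)"
      using C by (simp add: direct_sum_simps a_assoc)
  next
    fix \<phi> \<psi> assume "\<phi> \<in> carrier (direct_sum M Q)" "\<psi> \<in> carrier (direct_sum M Q)"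
    then show "\<phi> \<oplus>\<^bsub>direct_sum M Q\<^esub> \<psi> = \<psi> \<oplus>\<^bsub>direct_sum M Q\<^esub> \<phi>"
      using C by (simp add: direct_sum_simps a_comm)
  next
    fix \<phi> assume "\<phi> \<in> carrier (direct_sum M Q)"
    then show "\<zero>\<^bsub>direct_sum M Q\<^esub> \<oplus>\<^bsub>direct_sum M Q\<^esub> \<phi> = \<phi>"
      using C by (simp add: direct_sum_simps)
  next
    fix \<phi> assume \<phi>: "\<phi> \<in> carrier (direct_sum M Q)"
    have "{k. \<ominus> \<phi> k \<noteq> \<zero>} \<subseteq> {k. \<phi> k \<noteq> \<zero>}" by auto
    then have "(\<lambda>k. \<ominus> \<phi> k) \<in> carrier (direct_sum M Q)"
      using \<phi> QD(4) finite_subset by (auto simp: direct_sum_simps)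
    moreover have "(\<lambda>k. \<ominus> \<phi> k) \<oplus>\<^bsub>direct_sum M Q\<^esub> \<phi> = \<zero>\<^bsub>direct_sum M Q\<^esub>"
      using C[OF \<phi>] by (simp add: direct_sum_simps l_neg)
    ultimately show "\<exists>\<psi>\<in>carrier (direct_sum M Q). \<psi> \<oplus>\<^bsub>direct_sum M Q\<^esub> \<phi> = \<zero>\<^bsub>direct_sum M Q\<^esub>"
      by blast
  qed
qed

lemma left_module_direct_sum:
  assumes Q: "\<And>k. lsubmodule R M (Q k)"
  shows "left_module R (direct_sum M Q)"
proof -
  have C: "\<phi> k \<in> carrier M" if "\<phi> \<in> carrier (direct_sum M Q)" for \<phi> k
    using that lsubmoduleD(1)[OF Q] by (auto simp: direct_sum_simps)
  have "a \<odot>\<^bsub>direct_sum M Q\<^esub> \<phi> \<in> carrier (direct_sum M Q)"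
    if a: "a \<in> carrier R" and \<phi>: "\<phi> \<in> carrier (direct_sum M Q)" for a \<phi>
  proof -
    have "{k. a \<odot> \<phi> k \<noteq> \<zero>} \<subseteq> {k. \<phi> k \<noteq> \<zero>}" using a by auto
    then show ?thesis
      using \<phi> a lsubmoduleD(5)[OF Q] finite_subset by (auto simp: direct_sum_simps)
  qed
  with C show ?thesis
    unfolding left_module_def using ring abelian_group_direct_sum[OF Q]
    by (simp add: direct_sum_simps smult_add_left smult_add_right smult_assoc smult_one)
qed

lemma direct_sum_value_closed:
  assumes Q: "\<And>k. lsubmodule R M (Q k)" and \<phi>: "\<phi> \<in> carrier (direct_sum M Q)"
  shows "\<phi> k \<in> carrier M"
  using \<phi> lsubmoduleD(1)[OF Q] by (auto simp: direct_sum_simps)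

lemma direct_sum_inj_closed:
  assumes Q: "\<And>k. lsubmodule R M (Q k)" and m: "m \<in> Q k"
  shows "direct_sum_inj M k m \<in> carrier (direct_sum M Q)"
proof -
  have "finite {k'. direct_sum_inj M k m k' \<noteq> \<zero>}"
    by (rule finite_subset[of _ "{k}"]) (auto simp: direct_sum_inj_def)
  moreover have "direct_sum_inj M k m k' \<in> Q k'" for k'
    using m lsubmoduleD(2)[OF Q] by (simp add: direct_sum_inj_def)
  ultimately show ?thesis by (simp add: direct_sum_simps)
qed

lemma lhom_direct_sum_inj:
  assumes Q: "\<And>k. lsubmodule R M (Q k)" and h: "h \<in> lhom R N M" and hk: "h ` carrier N \<subseteq> Q k"
  shows "(\<lambda>x. direct_sum_inj M k (h x)) \<in> lhom R N (direct_sum M Q)"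
  unfolding lhom_def
proof (intro CollectI conjI ballI)
  show "direct_sum_inj M k (h x) \<in> carrier (direct_sum M Q)" if "x \<in> carrier N" for x
    by (rule direct_sum_inj_closed[OF Q]) (use hk that in blast)
  show "direct_sum_inj M k (h (x \<oplus>\<^bsub>N\<^esub> y)) =
      direct_sum_inj M k (h x) \<oplus>\<^bsub>direct_sum M Q\<^esub> direct_sum_inj M k (h y)"
    if "x \<in> carrier N" "y \<in> carrier N" for x y
    using lhom_add[OF h that] lhom_closed[OF h] that
    by (simp add: direct_sum_simps direct_sum_inj_def fun_eq_iff)
  show "direct_sum_inj M k (h (a \<odot>\<^bsub>N\<^esub> x)) = a \<odot>\<^bsub>direct_sum M Q\<^esub> direct_sum_inj M k (h x)"
    if "a \<in> carrier R" "x \<in> carrier N" for a x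
    using lhom_smult[OF h that] that(1) by (simp add: direct_sum_simps direct_sum_inj_def fun_eq_iff)
qed

lemma lhom_direct_sum_proj:
  assumes Q: "\<And>k. lsubmodule R M (Q k)"
  shows "(\<lambda>\<phi>. \<phi> k) \<in> lhom R (direct_sum M Q) M"
  unfolding lhom_def
  using direct_sum_value_closed[of Q, OF Q] by (simp add: direct_sum_simps)

lemma m_generated_direct_sum: "m_generated R M (direct_sum M (\<lambda>_. carrier M))"
proof -
  let ?X = "direct_sum M (\<lambda>_. carrier M)"
  have X: "left_module R ?X" by (rule left_module_direct_sum) (rule lsubmodule_carrier)
  interpret X: lmodule R ?X by unfold_locales (rule X)
  let ?S = "{f ` carrier M | f. f \<in> lhom R M ?X}"
  have "\<Union>?S \<subseteq> carrier ?X" by (auto dest: lhom_closed)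
  then have lsum_sub: "lsum R ?X ?S \<subseteq> carrier ?X" by (rule X.lsum_least[OF X.lsubmodule_carrier])
  have "carrier ?X \<subseteq> T" if T: "lsubmodule R ?X T" "\<Union>?S \<subseteq> T" for T
  proof -
    have inj: "direct_sum_inj M k m \<in> T" if m: "m \<in> carrier M" for k m
    proof -
      have "(\<lambda>x. direct_sum_inj M k (id x)) \<in> lhom R M ?X"
        by (rule lhom_direct_sum_inj[OF lsubmodule_carrier lhom_id]) simp
      then have "(\<lambda>x. direct_sum_inj M k (id x)) ` carrier M \<in> ?S" by blast
      then show ?thesis using T(2) m by auto
    qed
    have by_support: "\<forall>\<phi>\<in>carrier ?X. {k. \<phi> k \<noteq> \<zero>} \<subseteq> F \<longrightarrow> \<phi> \<in> T" if "finite F" for F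
      using that
    proof (induction F rule: finite_induct)
      case empty
      have "\<phi> = \<zero>\<^bsub>?X\<^esub>" if "{k. \<phi> k \<noteq> \<zero>} \<subseteq> {}" for \<phi>
        using that by (auto simp: direct_sum_simps)
      then show ?case using X.lsubmoduleD(2)[OF T(1)] by blast
    next
      case (insert k F)
      show ?case
      proof (intro ballI impI)
        fix \<phi> assume \<phi>: "\<phi> \<in> carrier ?X" and supp: "{k. \<phi> k \<noteq> \<zero>} \<subseteq> insert k F"
        have supp': "{k'. (\<phi>(k := \<zero>)) k' \<noteq> \<zero>} \<subseteq> F" using supp by auto
        then have "finite {k'. (\<phi>(k := \<zero>)) k' \<noteq> \<zero>}" using insert(1) by (rule finite_subset)
        then have "\<phi>(k := \<zero>) \<in> carrier ?X" using \<phi> by (simp add: direct_sum_simps)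
        then have "\<phi>(k := \<zero>) \<in> T" using insert.IH supp' by blast
        moreover have "direct_sum_inj M k (\<phi> k) \<in> T" using inj \<phi> by (simp add: direct_sum_simps)
        moreover have "\<phi> = direct_sum_inj M k (\<phi> k) \<oplus>\<^bsub>?X\<^esub> \<phi>(k := \<zero>)"
          using \<phi> by (intro ext) (simp add: direct_sum_simps direct_sum_inj_def)
        ultimately show "\<phi> \<in> T" using X.lsubmoduleD(3)[OF T(1)] by metis
      qed
    qed
    show ?thesis
    proof
      fix \<phi> assume "\<phi> \<in> carrier ?X"
      moreover from this have "finite {k. \<phi> k \<noteq> \<zero>}" by (simp add: direct_sum_simps)
      ultimately show "\<phi> \<in> T" using by_support by blast
    qed
  qed
  then have "carrier ?X \<subseteq> lsum R ?X ?S" unfolding lsum_def by blast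
  with lsum_sub X show ?thesis unfolding m_generated_def by blast
qed

lemma in_sigma_direct_sum:
  assumes Q: "\<And>k. lsubmodule R M (Q k)"
  shows "in_sigma R M (direct_sum M Q)"
proof -
  have "id \<in> lhom R (direct_sum M Q) (direct_sum M (\<lambda>_. carrier M))"
    using direct_sum_value_closed[of Q, OF Q] unfolding lhom_def by (simp add: direct_sum_simps)
  with left_module_direct_sum[of Q, OF Q] m_generated_direct_sum inj_on_id show ?thesis
    unfolding in_sigma_def by blast
qed

end

definition sum_map :: "('r, 'a, 'm) module_scheme \<Rightarrow> (('a \<Rightarrow> 'a) \<Rightarrow> 'a \<Rightarrow> 'a) \<Rightarrow> 'a univ \<Rightarrow> 'a"
  where "sum_map M u \<phi> = finsum M (\<lambda>j. u j (\<phi> j)) {j. \<phi> j \<noteq> \<zero>\<^bsub>M\<^esub>}"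

context lmodule
begin

context
  fixes Q :: "('a \<Rightarrow> 'a) \<Rightarrow> 'a set" and J :: "('a \<Rightarrow> 'a) set" and u :: "('a \<Rightarrow> 'a) \<Rightarrow> 'a \<Rightarrow> 'a"
  assumes Q: "\<And>k. lsubmodule R M (Q k)"
    and Q_outside: "\<And>k. k \<notin> J \<Longrightarrow> Q k = {\<zero>}"
    and u: "\<And>j. j \<in> J \<Longrightarrow> u j \<in> lhom R M M"
begin

lemma direct_sum_support:
  assumes "\<phi> \<in> carrier (direct_sum M Q)"
  shows "finite {k. \<phi> k \<noteq> \<zero>}" "{k. \<phi> k \<noteq> \<zero>} \<subseteq> J"
  using assms Q_outside by (auto simp: direct_sum_simps)

lemma sum_map_term_closed:
  assumes "\<phi> \<in> carrier (direct_sum M Q)" "j \<in> J"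
  shows "u j (\<phi> j) \<in> carrier M"
  using lhom_closed[OF u[OF assms(2)] direct_sum_value_closed[of Q, OF Q assms(1)]] .

lemma sum_map_eq_finsum:
  assumes \<phi>: "\<phi> \<in> carrier (direct_sum M Q)" and F: "finite F" "{k. \<phi> k \<noteq> \<zero>} \<subseteq> F" "F \<subseteq> J"
  shows "sum_map M u \<phi> = finsum M (\<lambda>j. u j (\<phi> j)) F"
  unfolding sum_map_def
proof (rule add.finprod_mono_neutral_cong_left)
  show "u j (\<phi> j) = \<zero>" if "j \<in> F - {k. \<phi> k \<noteq> \<zero>}" for j
    using that F(3) lhom_zero[OF abelian_group_axioms u] by auto
  show "(\<lambda>j. u j (\<phi> j)) \<in> F \<rightarrow> carrier M"
    using sum_map_term_closed[OF \<phi>] F(3) by auto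
qed (use F in auto)

lemma lhom_sum_map: "sum_map M u \<in> lhom R (direct_sum M Q) M"
  unfolding lhom_def
proof (intro CollectI conjI ballI)
  show "sum_map M u \<phi> \<in> carrier M" if \<phi>: "\<phi> \<in> carrier (direct_sum M Q)" for \<phi>
    unfolding sum_map_def
    using sum_map_term_closed[OF \<phi>] direct_sum_support[OF \<phi>] by (intro finsum_closed) auto
next
  fix \<phi> \<psi> assume \<phi>: "\<phi> \<in> carrier (direct_sum M Q)" and \<psi>: "\<psi> \<in> carrier (direct_sum M Q)"
  let ?F = "{k. \<phi> k \<noteq> \<zero>} \<union> {k. \<psi> k \<noteq> \<zero>}"
  have F: "finite ?F" "?F \<subseteq> J" using direct_sum_support[OF \<phi>] direct_sum_support[OF \<psi>] by auto
  have sum: "\<phi> \<oplus>\<^bsub>direct_sum M Q\<^esub> \<psi> \<in> carrier (direct_sum M Q)"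
    using abelian_group_direct_sum[of Q, OF Q] \<phi> \<psi> by (rule abelian_groupE(1))
  have terms: "(\<lambda>j. u j (\<phi> j)) \<in> ?F \<rightarrow> carrier M" "(\<lambda>j. u j (\<psi> j)) \<in> ?F \<rightarrow> carrier M"
    using F(2) sum_map_term_closed[OF \<phi>] sum_map_term_closed[OF \<psi>] by auto
  have "sum_map M u (\<phi> \<oplus>\<^bsub>direct_sum M Q\<^esub> \<psi>) = finsum M (\<lambda>j. u j (\<phi> j \<oplus> \<psi> j)) ?F"
  proof -
    have "{k. \<phi> k \<oplus> \<psi> k \<noteq> \<zero>} \<subseteq> ?F" by auto
    then show ?thesis using sum_map_eq_finsum[OF sum F(1) _ F(2)] by (simp add: direct_sum_simps)
  qed
  also have "\<dots> = finsum M (\<lambda>j. u j (\<phi> j) \<oplus> u j (\<psi> j)) ?F"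
    using F(2) terms direct_sum_value_closed[of Q, OF Q] \<phi> \<psi> lhom_add[OF u]
    by (intro add.finprod_cong') (auto simp: direct_sum_simps)
  also have "\<dots> = finsum M (\<lambda>j. u j (\<phi> j)) ?F \<oplus> finsum M (\<lambda>j. u j (\<psi> j)) ?F"
    using terms by (rule finsum_addf)
  also have "\<dots> = sum_map M u \<phi> \<oplus> sum_map M u \<psi>"
    using sum_map_eq_finsum[OF \<phi> F(1) _ F(2)] sum_map_eq_finsum[OF \<psi> F(1) _ F(2)] by auto
  finally show "sum_map M u (\<phi> \<oplus>\<^bsub>direct_sum M Q\<^esub> \<psi>) = sum_map M u \<phi> \<oplus> sum_map M u \<psi>" .
next
  fix a \<phi> assume a: "a \<in> carrier R" and \<phi>: "\<phi> \<in> carrier (direct_sum M Q)"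
  let ?F = "{k. \<phi> k \<noteq> \<zero>}"
  have F: "finite ?F" "?F \<subseteq> J" using direct_sum_support[OF \<phi>] by auto
  have a\<phi>: "a \<odot>\<^bsub>direct_sum M Q\<^esub> \<phi> \<in> carrier (direct_sum M Q)"
    using left_module_direct_sum[of Q, OF Q] a \<phi> unfolding left_module_def by blast
  have "sum_map M u (a \<odot>\<^bsub>direct_sum M Q\<^esub> \<phi>) = finsum M (\<lambda>j. u j (a \<odot> \<phi> j)) ?F"
  proof -
    have "{k. a \<odot> \<phi> k \<noteq> \<zero>} \<subseteq> ?F" using a by auto
    then show ?thesis using sum_map_eq_finsum[OF a\<phi> F(1) _ F(2)] by (simp add: direct_sum_simps)
  qed
  also have "\<dots> = finsum M (\<lambda>j. a \<odot> u j (\<phi> j)) ?F"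
    using F(2) \<phi> a direct_sum_value_closed[of Q, OF Q] lhom_smult[OF u] sum_map_term_closed[OF \<phi>]
    by (intro add.finprod_cong') (auto simp: direct_sum_simps)
  also have "\<dots> = a \<odot> sum_map M u \<phi>"
    unfolding sum_map_def using F(2) sum_map_term_closed[OF \<phi>]
    by (intro finsum_smult[OF a F(1), symmetric]) auto
  finally show "sum_map M u (a \<odot>\<^bsub>direct_sum M Q\<^esub> \<phi>) = a \<odot> sum_map M u \<phi>" .
qed

lemma sum_map_image:
  "sum_map M u ` carrier (direct_sum M Q) = lsum R M ((\<lambda>j. u j ` Q j) ` J)"
proof
  have "u j ` Q j \<subseteq> carrier M" if "j \<in> J" for j
    using that lsubmoduleD(1)[OF Q] lhom_closed[OF u] by blast
  then have lsum: "lsubmodule R M (lsum R M ((\<lambda>j. u j ` Q j) ` J))"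
    by (intro lsubmodule_lsum) blast
  show "sum_map M u ` carrier (direct_sum M Q) \<subseteq> lsum R M ((\<lambda>j. u j ` Q j) ` J)"
  proof
    fix y assume "y \<in> sum_map M u ` carrier (direct_sum M Q)"
    then obtain \<phi> where \<phi>: "\<phi> \<in> carrier (direct_sum M Q)" and y: "y = sum_map M u \<phi>"
      by (elim imageE)
    have "u j (\<phi> j) \<in> lsum R M ((\<lambda>j. u j ` Q j) ` J)" if "j \<in> J" for j
      using that \<phi> lsum_upper[of "u j ` Q j" "(\<lambda>j. u j ` Q j) ` J"] by (auto simp: direct_sum_simps)
    then show "y \<in> lsum R M ((\<lambda>j. u j ` Q j) ` J)"
      unfolding y sum_map_def using direct_sum_support[OF \<phi>]
      by (intro finsum_in_lsubmodule[OF lsum]) auto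
  qed
  have "u j q \<in> sum_map M u ` carrier (direct_sum M Q)" if j: "j \<in> J" and q: "q \<in> Q j" for j q
  proof -
    have inj: "direct_sum_inj M j q \<in> carrier (direct_sum M Q)"
      by (rule direct_sum_inj_closed[of Q, OF Q q])
    have "sum_map M u (direct_sum_inj M j q) = finsum M (\<lambda>k. u k (direct_sum_inj M j q k)) {j}"
      using j by (intro sum_map_eq_finsum[OF inj]) (auto simp: direct_sum_inj_def)
    also have "\<dots> = u j q"
      using sum_map_term_closed[OF inj j] by (simp add: direct_sum_inj_def)
    finally show ?thesis using inj by (intro image_eqI) auto
  qed
  then show "lsum R M ((\<lambda>j. u j ` Q j) ` J) \<subseteq> sum_map M u ` carrier (direct_sum M Q)"
    by (intro lsum_least lsubmodule_image[OF left_module_direct_sum[of Q, OF Q] lhom_sum_map]) blast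
qed

end

text \<open>Projectivity is applied to the epimorphism \<open>A \<rightarrow> S(A)\<close>, with \<open>S(A)\<close> placed into
  \<open>\<sigma>[M]\<close> as a single coordinate of a direct sum.\<close>

lemma sigma_projective_lift:
  fixes A :: "('r, 'a univ) module"
  assumes proj: "sigma_projective R M" and A: "in_sigma R M A" and S: "S \<in> lhom R A M"
    and f: "f \<in> lhom R M M" "f ` carrier M \<subseteq> S ` carrier A"
  shows "\<exists>h\<in>lhom R M A. \<forall>x\<in>carrier M. S (h x) = f x"
proof -
  define Q where "Q k = (if k = id then S ` carrier A else {\<zero>})" for k :: "'a \<Rightarrow> 'a"
  have "lsubmodule R M (S ` carrier A)"
    using A S by (intro lsubmodule_image) (simp add: in_sigma_def)
  then have Q: "lsubmodule R M (Q k)" for k using lsubmodule_zero by (simp add: Q_def)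
  let ?B = "direct_sum M Q"
  let ?g = "\<lambda>\<phi>. direct_sum_inj M id (S \<phi>)"
  let ?f' = "\<lambda>x. direct_sum_inj M id (f x)"
  have g: "?g \<in> lhom R A ?B"
    using S by (rule lhom_direct_sum_inj[of Q, OF Q]) (simp add: Q_def)
  have f': "?f' \<in> lhom R M ?B"
    using f(1) by (rule lhom_direct_sum_inj[of Q, OF Q]) (use f(2) in \<open>simp add: Q_def\<close>)
  have "carrier ?B \<subseteq> ?g ` carrier A"
  proof
    fix \<psi> assume \<psi>: "\<psi> \<in> carrier ?B"
    then have \<psi>k: "\<psi> k \<in> Q k" for k by (simp add: direct_sum_simps)
    have "\<psi> = direct_sum_inj M id (\<psi> id)"
    proof
      fix k show "\<psi> k = direct_sum_inj M id (\<psi> id) k"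
        using \<psi>k[of k] by (cases "k = id") (simp_all add: Q_def direct_sum_inj_def)
    qed
    moreover have "\<psi> id \<in> S ` carrier A" using \<psi>k[of id] by (simp add: Q_def)
    ultimately show "\<psi> \<in> ?g ` carrier A" by auto
  qed
  then have onto: "?g ` carrier A = carrier ?B" using lhom_closed[OF g] by blast
  obtain h where h: "h \<in> lhom R M A" "\<And>x. x \<in> carrier M \<Longrightarrow> ?g (h x) = ?f' x"
    using proj[unfolded sigma_projective_def, rule_format, of A ?B ?g ?f']
      A in_sigma_direct_sum[of Q, OF Q] g onto f' by blast
  have "S (h x) = f x" if "x \<in> carrier M" for x
    using fun_cong[OF h(2)[OF that], of id] by (simp add: direct_sum_inj_def)
  with h(1) show ?thesis by blast
qed

lemma sigma_projective_image_subset: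
  fixes J :: "('a \<Rightarrow> 'a) set"
  assumes proj: "sigma_projective R M"
    and Q: "\<And>j. j \<in> J \<Longrightarrow> lsubmodule R M (Q j)" and u: "\<And>j. j \<in> J \<Longrightarrow> u j \<in> lhom R M M"
    and f: "f \<in> lhom R M M" "f ` carrier M \<subseteq> lsum R M ((\<lambda>j. u j ` Q j) ` J)"
    and T: "lsubmodule R M T" and N: "N \<subseteq> carrier M"
    and H: "\<And>h j x. j \<in> J \<Longrightarrow> h \<in> lhom R M M \<Longrightarrow> h ` carrier M \<subseteq> Q j \<Longrightarrow> x \<in> N \<Longrightarrow> u j (h x) \<in> T"
  shows "f ` N \<subseteq> T"
proof -
  define Q' where "Q' k = (if k \<in> J then Q k else {\<zero>})" for k
  have Q': "lsubmodule R M (Q' k)" for k using Q lsubmodule_zero by (simp add: Q'_def)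
  have outside: "Q' k = {\<zero>}" if "k \<notin> J" for k using that by (simp add: Q'_def)
  have "(\<lambda>j. u j ` Q' j) ` J = (\<lambda>j. u j ` Q j) ` J" by (simp add: Q'_def)
  then have "f ` carrier M \<subseteq> sum_map M u ` carrier (direct_sum M Q')"
    using f(2) sum_map_image[of Q' J u, OF Q' outside u] by simp
  then obtain h where h: "h \<in> lhom R M (direct_sum M Q')"
      "\<And>x. x \<in> carrier M \<Longrightarrow> sum_map M u (h x) = f x"
    using sigma_projective_lift[OF proj in_sigma_direct_sum[of Q', OF Q']
        lhom_sum_map[of Q' J u, OF Q' outside u] f(1)] by blast
  show ?thesis
  proof (rule image_subsetI)
    fix x assume x: "x \<in> N"
    then have hx: "h x \<in> carrier (direct_sum M Q')" using lhom_closed[OF h(1)] N by blast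
    have "u j (h x j) \<in> T" if "j \<in> {j. h x j \<noteq> \<zero>}" for j
    proof -
      have j: "j \<in> J" using that direct_sum_support[of Q' J u, OF Q' outside u hx] by blast
      have "(\<lambda>y. h y j) \<in> lhom R M M"
        using lhom_comp[OF h(1) lhom_direct_sum_proj[of Q', OF Q']] by (simp add: comp_def)
      moreover have "(\<lambda>y. h y j) ` carrier M \<subseteq> Q j"
      proof (rule image_subsetI)
        fix y assume "y \<in> carrier M"
        then have "h y j \<in> Q' j" using lhom_closed[OF h(1)] by (simp add: direct_sum_simps)
        then show "h y j \<in> Q j" using j by (simp add: Q'_def)
      qed
      ultimately show ?thesis by (rule H[OF j _ _ x])
    qed
    then have "sum_map M u (h x) \<in> T"
      unfolding sum_map_def
      using direct_sum_support[of Q' J u, OF Q' outside u hx] by (intro finsum_in_lsubmodule[OF T]) auto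
    then show "f x \<in> T" using h(2) x N by auto
  qed
qed

lemma mprod_assoc_supset:
  assumes proj: "sigma_projective R M" and N: "N \<in> Lat R M" and L: "L \<in> Lat R M"
  shows "mprod R M N (mprod R M L K) \<subseteq> mprod R M (mprod R M N L) K"
proof (rule mprod_least)
  let ?T = "mprod R M (mprod R M N L) K"
  show T: "lsubmodule R M ?T"
    using Lat_subset_carrier[OF mprod_in_Lat[OF N]] by (rule lsubmodule_mprod)
  fix f assume f: "f \<in> lhom R M M" "f ` carrier M \<subseteq> mprod R M L K"
  let ?J = "{g. g \<in> lhom R M M \<and> g ` carrier M \<subseteq> K}"
  have "mprod R M L K = lsum R M ((\<lambda>j. j ` L) ` ?J)"
    unfolding mprod_def by (rule arg_cong[where f="lsum R M"]) blast
  show "f ` N \<subseteq> ?T"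
  proof (rule sigma_projective_image_subset[OF proj, where Q="\<lambda>_. L" and u="\<lambda>j. j" and J="?J"])
    fix h j x assume j: "j \<in> ?J" and h: "h \<in> lhom R M M" "h ` carrier M \<subseteq> L" and x: "x \<in> N"
    have "h x \<in> mprod R M N L" using image_subset_mprod[OF h] x by blast
    then show "j (h x) \<in> ?T" using image_subset_mprod[of j K "mprod R M N L"] j by blast
  qed (use f L T Lat_subset_carrier[OF N] \<open>mprod R M L K = _\<close> in \<open>auto simp: Lat_iff\<close>)
qed

lemma mprod_assoc:
  assumes "sigma_projective R M" "N \<in> Lat R M" "L \<in> Lat R M"
  shows "mprod R M (mprod R M N L) K = mprod R M N (mprod R M L K)"
  using mprod_assoc_subset[OF assms(2)] mprod_assoc_supset[OF assms] by (rule subset_antisym)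

end

lemma ex_inj_on_into_endofunctions:
  fixes X :: "'a set set"
  assumes "\<And>L. L \<in> X \<Longrightarrow> z \<in> L"
  shows "\<exists>c :: 'a set \<Rightarrow> 'a \<Rightarrow> 'a. inj_on c X"
proof (cases "\<exists>y1 y2 :: 'a. y1 \<noteq> y2")
  case True
  then obtain y1 y2 :: 'a where "y1 \<noteq> y2" by blast
  then have "inj (\<lambda>L x. if x \<in> L then y1 else y2)"
    by (intro injI) (metis (full_types) subsetI subset_antisym)
  then show ?thesis by (meson inj_on_subset subset_UNIV)
next
  case False
  then have "L = UNIV" if "L \<in> X" for L using assms[OF that] by (metis UNIV_eq_I)
  then have "inj_on (\<lambda>_. id) X" by (auto simp: inj_on_def)
  then show ?thesis by blast
qed

context lmodule
begin

lemma mprod_lsum_right: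
  assumes proj: "sigma_projective R M" and N: "N \<in> Lat R M" and X: "X \<subseteq> Lat R M"
  shows "mprod R M N (lsum R M X) = lsum R M ((\<lambda>L. mprod R M N L) ` X)"
    (is "?lhs = ?rhs")
proof
  have NC: "N \<subseteq> carrier M" using N by (rule Lat_subset_carrier)
  have "(\<lambda>L. mprod R M N L) ` X \<subseteq> Lat R M" using N by (auto intro: mprod_in_Lat)
  then have T: "lsubmodule R M ?rhs" using lsum_in_Lat by (simp add: Lat_iff)
  have "\<zero> \<in> L" if "L \<in> X" for L
    using X that lsubmoduleD(2) unfolding Lat_iff[symmetric] by blast
  then have "\<exists>c :: 'a set \<Rightarrow> 'a \<Rightarrow> 'a. inj_on c X" by (rule ex_inj_on_into_endofunctions)
  then obtain c :: "'a set \<Rightarrow> 'a \<Rightarrow> 'a" where c: "inj_on c X" by blast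
  let ?Q = "inv_into X c"
  have QX: "?Q j \<in> X" if "j \<in> c ` X" for j using that by (rule inv_into_into)
  have reindex: "(\<lambda>j. id ` ?Q j) ` c ` X = X" using inv_into_image_cancel[OF c subset_refl] by simp
  show "?lhs \<subseteq> ?rhs"
  proof (rule mprod_least[OF T])
    fix f assume f: "f \<in> lhom R M M" "f ` carrier M \<subseteq> lsum R M X"
    show "f ` N \<subseteq> ?rhs"
    proof (rule sigma_projective_image_subset[OF proj, where Q="?Q" and u="\<lambda>_. id" and J="c ` X"])
      fix h j x assume j: "j \<in> c ` X" and h: "h \<in> lhom R M M" "h ` carrier M \<subseteq> ?Q j" and x: "x \<in> N"
      have "h x \<in> mprod R M N (?Q j)" using image_subset_mprod[OF h] x by blast
      then show "id (h x) \<in> ?rhs" using lsum_upper[OF imageI[OF QX[OF j]]] by auto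
    next
      show "lsubmodule R M (?Q j)" if "j \<in> c ` X" for j
        using X QX[OF that] by (auto simp: Lat_iff)
      show "f ` carrier M \<subseteq> lsum R M ((\<lambda>j. id ` ?Q j) ` c ` X)"
        unfolding reindex by (rule f(2))
    qed (use f(1) T NC lhom_id in auto)
  qed
  have "mprod R M N L \<subseteq> ?lhs" if "L \<in> X" for L
    by (rule mprod_mono[OF subset_refl lsum_upper[OF that] NC])
  then show "?rhs \<subseteq> ?lhs"
    by (intro lsum_least[OF lsubmodule_mprod[OF NC]] UN_least)
qed

lemma quasi_quantale_Lat:
  assumes proj: "sigma_projective R M"
  shows "quasi_quantale (Lat R M) (mprod R M)"
proof (rule quasi_quantaleI[where lub="lsum R M"])
  show "mprod R M (lsum R M X) a = lsum R M ((\<lambda>x. mprod R M x a) ` X)" if "X \<subseteq> Lat R M" for X a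
    using mprod_lsum_left[of X "\<lambda>x. x" a] that by auto
  show "mprod R M (mprod R M a b) c = mprod R M a (mprod R M b c)"
    if "a \<in> Lat R M" "b \<in> Lat R M" for a b c
    using proj that by (rule mprod_assoc)
qed (simp_all add: is_sup_in_Lat mprod_in_Lat mprod_lsum_right[OF proj])

lemma quasi_quantale_Lat_fi:
  assumes proj: "sigma_projective R M"
  shows "quasi_quantale (Lat_fi R M) (mprod R M)"
proof (rule quasi_quantaleI[where lub="lsum R M"])
  fix X a assume X: "X \<subseteq> Lat_fi R M" and a: "a \<in> Lat_fi R M"
  have "X \<subseteq> Lat R M" "a \<in> Lat R M" using X a Lat_fi_subset_Lat by auto
  then show "mprod R M (lsum R M X) a = lsum R M ((\<lambda>x. mprod R M x a) ` X)"
    and "mprod R M a (lsum R M X) = lsum R M ((\<lambda>x. mprod R M a x) ` X)"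
    using mprod_lsum_left[of X "\<lambda>x. x" a] mprod_lsum_right[OF proj] by auto
next
  fix a b c assume "a \<in> Lat_fi R M" "b \<in> Lat_fi R M"
  then have "a \<in> Lat R M" "b \<in> Lat R M" using Lat_fi_subset_Lat by auto
  then show "mprod R M (mprod R M a b) c = mprod R M a (mprod R M b c)"
    using proj by (intro mprod_assoc)
next
  fix a b assume "a \<in> Lat_fi R M" "b \<in> Lat_fi R M"
  then show "mprod R M a b \<in> Lat_fi R M"
    using Lat_fi_subset_Lat Lat_subset_carrier by (intro mprod_in_Lat_fi) auto
qed (fact is_sup_in_Lat_fi)

end

theorem proposition4p3:
  fixes R :: "('r, 'x) ring_scheme" and M :: "('r, 'a, 'm) module_scheme"
  assumes "left_module R M" and "sigma_projective R M"
  shows "quasi_quantale (Lat R M) (mprod R M) \<and>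
    (\<forall>(N :: 'i \<Rightarrow> 'a set) I L. (\<forall>i\<in>I. N i \<in> Lat R M) \<and> L \<in> Lat R M \<longrightarrow>
        mprod R M (lsum R M (N ` I)) L = lsum R M ((\<lambda>i. mprod R M (N i) L) ` I))
   \<and> quasi_quantale (Lat_fi R M) (mprod R M) \<and>
    (\<forall>S. S \<subseteq> Lat_fi R M \<longrightarrow> lsum R M S \<in> Lat_fi R M) \<and>
    (\<forall>N\<in>Lat_fi R M. \<forall>L\<in>Lat_fi R M. mprod R M N L \<in> Lat_fi R M) \<and>
    (\<forall>N\<in>Lat_fi R M. mprod R M N (carrier M) = N)"
proof -
  interpret lmodule R M by unfold_locales (rule assms(1))
  have "mprod R M N L \<in> Lat_fi R M" if "N \<in> Lat_fi R M" "L \<in> Lat_fi R M" for N L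
    using that Lat_fi_subset_Lat Lat_subset_carrier by (intro mprod_in_Lat_fi) auto
  moreover have "mprod R M (lsum R M (N ` I)) L = lsum R M ((\<lambda>i. mprod R M (N i) L) ` I)"
    if "\<forall>i\<in>I. N i \<in> Lat R M" for N :: "'i \<Rightarrow> 'a set" and I L
    using that by (rule mprod_lsum_left)
  ultimately show ?thesis
    using quasi_quantale_Lat[OF assms(2)] quasi_quantale_Lat_fi[OF assms(2)]
      lsum_in_Lat_fi mprod_carrier_right by simp
qed

end
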